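(* Let $\xi>0$ be such that $D_{\xi}:=D^TD-\xi^2 I$ is nonsingular. Then for every $\omega\geq 0$, the matrix $G(j\omega)$ has a singular value equal to $\xi$ if and only if $\lambda=j\omega$ is an eigenvalue of the linear operator $\mathcal{L}_{\xi}$, i.e. there exists $u\in\mathcal{D}(\mathcal{L}_{\xi})$, $u\neq 0$, with $\mathcal{L}_{\xi}u=j\omega\, u$.
   Context: Let $n,m,n_u,n_y$ be positive integers, $A_0,\dots,A_m\in\mathbb{R}^{n\times n}$, $B\in\mathbb{R}^{n\times n_u}$, $C\in\mathbb{R}^{n_y\times n}$, $D\in\mathbb{R}^{n_y\times n_u}$, and delays $\tau_1,\dots,\tau_m\geq 0$ with $\tau_{\max}=\max_i\tau_i$. The transfer function is $G(s)=C\left(sI-A_0-\sum_{i=1}^m A_i e^{-\tau_i s}\right)^{-1}B+D$. Standing assumption: the system is stable, i.e. all solutions $s$ of $\det\left(sI-A_0-\sum_{i=1}^m A_i e^{-\tau_i s}\right)=0$ have negative real part. For $\xi>0$ put $D_\xi=D^TD-\xi^2I_{n_u}$ and $\tilde D_\xi=DD^T-\xi^2 I_{n_y}$ (for $\xi>0$ one is nonsingular iff the other is). Define the $2n\times 2n$ matrices $M_0=\begin{bmatrix} A_0-BD_\xi^{-1}D^TC & -BD_\xi^{-1}B^T\\ \xi^2 C^T\tilde D_\xi^{-1}C & -A_0^T+C^TDD_\xi^{-1}B^T\end{bmatrix}$, $M_i=\begin{bmatrix}A_i&0\\0&0\end{bmatrix}$, $M_{-i}=\begin{bmatrix}0&0\\0&-A_i^T\end{bmatrix}$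 for $1\le i\le m$. Let $X=\mathcal{C}([-\tau_{\max},\tau_{\max}],\mathbb{C}^{2n})$ (continuous functions). The operator $\mathcal{L}_\xi$ on $X$ has domain $\mathcal{D}(\mathcal{L}_\xi)=\{\phi\in X:\ \phi'\in X,\ \phi'(0)=M_0\phi(0)+\sum_{i=1}^m(M_i\phi(-\tau_i)+M_{-i}\phi(\tau_i))\}$ and acts by $\mathcal{L}_\xi\phi=\phi'$. *)

theory Defs
  imports "HOL-Analysis.Analysis"
begin

definition cmat :: "real^'b^'a \<Rightarrow> complex^'b^'a" where
  "cmat M = (\<chi> i j. complex_of_real (M$i$j))"

definition cadj :: "complex^'b^'a \<Rightarrow> complex^'a^'b" where
  "cadj M = (\<chi> i j. cnj (M$j$i))"

definition csmult :: "complex \<Rightarrow> complex^'b^'a \<Rightarrow> complex^'b^'a" where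
  "csmult c M = (\<chi> i j. c * M$i$j)"

definition is_singular_value :: "complex^'b^'a \<Rightarrow> real \<Rightarrow> bool" where
  "is_singular_value G \<sigma> \<longleftrightarrow> \<sigma> \<ge> 0 \<and>
     (\<exists>v w. v \<noteq> 0 \<and> w \<noteq> 0 \<and> G *v v = complex_of_real \<sigma> *s w
          \<and> cadj G *v w = complex_of_real \<sigma> *s v)"

definition char_mat :: "nat \<Rightarrow> (nat \<Rightarrow> real^'n^'n) \<Rightarrow> (nat \<Rightarrow> real) \<Rightarrow> complex \<Rightarrow> complex^'n^'n" where
  "char_mat m A tau s = mat s - cmat (A 0)
     - (\<Sum>i\<in>{1..m}. csmult (exp (- complex_of_real (tau i) * s)) (cmat (A i)))"

definition transfer :: "nat \<Rightarrow> (nat \<Rightarrow> real^'n^'n) \<Rightarrow> (nat \<Rightarrow> real) \<Rightarrow> real^'u^'n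
     \<Rightarrow> real^'n^'y \<Rightarrow> real^'u^'y \<Rightarrow> complex \<Rightarrow> complex^'u^'y" where
  "transfer m A tau B C D s = cmat C ** matrix_inv (char_mat m A tau s) ** cmat B + cmat D"

definition Dxi :: "real^'u^'y \<Rightarrow> real \<Rightarrow> real^'u^'u" where
  "Dxi D \<xi> = transpose D ** D - mat (\<xi>\<^sup>2)"

definition Dtxi :: "real^'u^'y \<Rightarrow> real \<Rightarrow> real^'y^'y" where
  "Dtxi D \<xi> = D ** transpose D - mat (\<xi>\<^sup>2)"

definition blockmat :: "'a::zero^'n^'n \<Rightarrow> 'a^'n^'n \<Rightarrow> 'a^'n^'n \<Rightarrow> 'a^'n^'n \<Rightarrow> 'a^('n+'n)^('n+'n)" where
  "blockmat P Q R S = (\<chi> i j. case i of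
       Inl a \<Rightarrow> (case j of Inl b \<Rightarrow> P$a$b | Inr b \<Rightarrow> Q$a$b)
     | Inr a \<Rightarrow> (case j of Inl b \<Rightarrow> R$a$b | Inr b \<Rightarrow> S$a$b))"

definition M0 :: "(nat \<Rightarrow> real^'n^'n) \<Rightarrow> real^'u^'n \<Rightarrow> real^'n^'y \<Rightarrow> real^'u^'y \<Rightarrow> real
     \<Rightarrow> real^('n+'n)^('n+'n)" where
  "M0 A B C D \<xi> = blockmat
     (A 0 - B ** matrix_inv (Dxi D \<xi>) ** transpose D ** C)
     (- (B ** matrix_inv (Dxi D \<xi>) ** transpose B))
     (\<xi>\<^sup>2 *\<^sub>R (transpose C ** matrix_inv (Dtxi D \<xi>) ** C))
     (- transpose (A 0) + transpose C ** D ** matrix_inv (Dxi D \<xi>) ** transpose B)"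

definition Mpos :: "(nat \<Rightarrow> real^'n^'n) \<Rightarrow> nat \<Rightarrow> real^('n+'n)^('n+'n)" where
  "Mpos A i = blockmat (A i) 0 0 0"

definition Mneg :: "(nat \<Rightarrow> real^'n^'n) \<Rightarrow> nat \<Rightarrow> real^('n+'n)^('n+'n)" where
  "Mneg A i = blockmat 0 0 0 (- transpose (A i))"

definition tau_max :: "nat \<Rightarrow> (nat \<Rightarrow> real) \<Rightarrow> real" where
  "tau_max m tau = Max (tau ` {1..m})"

text \<open>phi is in the domain of L_xi with derivative psi (so L_xi phi = psi), phi, psi
  considered as elements of X = C([-tau_max, tau_max], C^{2n}).\<close>
definition in_dom_L :: "nat \<Rightarrow> (nat \<Rightarrow> real^'n^'n) \<Rightarrow> (nat \<Rightarrow> real) \<Rightarrow> real^'u^'n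
     \<Rightarrow> real^'n^'y \<Rightarrow> real^'u^'y \<Rightarrow> real
     \<Rightarrow> (real \<Rightarrow> complex^('n+'n)) \<Rightarrow> (real \<Rightarrow> complex^('n+'n)) \<Rightarrow> bool" where
  "in_dom_L m A tau B C D \<xi> \<phi> \<psi> \<longleftrightarrow>
     (let I = {- tau_max m tau .. tau_max m tau} in
        continuous_on I \<phi> \<and> continuous_on I \<psi> \<and>
        (\<forall>t\<in>I. (\<phi> has_vector_derivative \<psi> t) (at t within I)) \<and>
        \<psi> 0 = cmat (M0 A B C D \<xi>) *v \<phi> 0
              + (\<Sum>i\<in>{1..m}. cmat (Mpos A i) *v \<phi> (- tau i) + cmat (Mneg A i) *v \<phi> (tau i)))"

definition is_eigenvalue_L :: "nat \<Rightarrow> (nat \<Rightarrow> real^'n^'n) \<Rightarrow> (nat \<Rightarrow> real) \<Rightarrow> real^'u^'n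
     \<Rightarrow> real^'n^'y \<Rightarrow> real^'u^'y \<Rightarrow> real \<Rightarrow> complex \<Rightarrow> bool" where
  "is_eigenvalue_L m A tau B C D \<xi> lam \<longleftrightarrow>
     (let I = {- tau_max m tau .. tau_max m tau} in
       \<exists>u \<psi>. in_dom_L m A tau B C D \<xi> u \<psi> \<and> (\<exists>t\<in>I. u t \<noteq> 0) \<and>
              (\<forall>t\<in>I. \<psi> t = lam *s u t))"

end

theory Submission
  imports Defs
begin

(* An eigenfunction of L_xi for lambda solves u' = lambda u, so it is t |-> e^(lambda t) phi, and
   the boundary condition of the domain becomes a characteristic equation for phi = (x, z).  For
   lambda = j omega we have conj lambda = - lambda, so with H = lambda I - A_0 - sum_i A_i e^(-tau_i lambda)
   the two block rows of that equation read
     H x = - B D_xi^-1 (D^T C x + B^T z),   H^H z = - C^T (xi^2 Dt_xi^-1 C x + D D_xi^-1 B^T z).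
   On the other side, xi is a singular value of G(j omega) = C H^-1 B + D iff G^H G v = xi^2 v for
   some v ~= 0; with the state x = H^-1 B v, the output w = G v and the costate z = H^-H C^T w this
   reads
     H x = B v,   H^H z = C^T w,   C x + D v = w,   B^T z + D^T w = xi^2 v.
   Solving the last two equations for v and w with D_xi^-1 and the push-through identity
   I - D D_xi^-1 D^T = - xi^2 Dt_xi^-1 turns the first two into the pair above, and every step can
   be reversed. *)

lemma matrix_inv_right:
  fixes A :: "'a::semiring_1^'n^'m"
  assumes "invertible A"
  shows "A ** matrix_inv A = mat 1"
  using someI_ex[OF assms[unfolded invertible_def]] by (simp add: matrix_inv_def)

lemma matrix_inv_left:
  fixes A :: "'a::semiring_1^'n^'m"
  assumes "invertible A"
  shows "matrix_inv A ** A = mat 1"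
  using someI_ex[OF assms[unfolded invertible_def]] by (simp add: matrix_inv_def)

lemma matrix_inv_unique:
  fixes A :: "'a::semiring_1^'n^'m"
  assumes "invertible A" and "B ** A = mat 1"
  shows "matrix_inv A = B"
  by (metis assms matrix_inv_right matrix_mul_assoc matrix_mul_lid matrix_mul_rid)

lemma matrix_vector_mult_matrix_inv:
  fixes A :: "'a::semiring_1^'n^'n"
  assumes "invertible A"
  shows "A *v (matrix_inv A *v x) = x" and "matrix_inv A *v (A *v x) = x"
  by (simp_all add: assms matrix_inv_right matrix_inv_left matrix_vector_mul_assoc)

lemma matrix_vector_mult_eq_iff_matrix_inv:
  fixes A :: "'a::field^'n^'n"
  assumes "invertible A"
  shows "A *v x = y \<longleftrightarrow> x = matrix_inv A *v y"
  using matrix_vector_mult_matrix_inv[OF assms] by metis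

lemma matrix_vector_mult_mat: "mat c *v x = c *s (x::'a::semiring_1^'n)"
  by (simp add: mat_def matrix_vector_mult_def vec_eq_iff if_distrib if_distribR cong: if_cong)

lemma matrix_vector_mult_uminus_left: "(- A) *v x = - (A *v (x::'a::ring_1^'n))"
  by (simp add: matrix_vector_mult_def vec_eq_iff sum_negf)

lemma matrix_vector_mult_uminus_right: "A *v (- x) = - (A *v (x::'a::ring_1^'n))"
  by (simp add: matrix_vector_mult_def vec_eq_iff sum_negf)

lemma matrix_vector_mult_sum_left:
  "(\<Sum>i\<in>S. A i) *v x = (\<Sum>i\<in>S. A i *v (x::'a::semiring_1^'n))"
  by (simp add: matrix_vector_mult_def vec_eq_iff sum_distrib_right sum_component
      flip: sum.swap[of _ UNIV S])

lemma mult_diff_mat_intertwine: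
  fixes X :: "'a::field^'n^'m" and Y :: "'a^'m^'n"
  shows "(X ** Y - mat c) *v (X *v u) = X *v ((Y ** X - mat c) *v u)"
  by (simp add: matrix_vector_mult_diff_rdistrib matrix_vector_mult_diff_distrib
      matrix_vector_mult_mat vector_scalar_commute flip: matrix_vector_mul_assoc)

lemma invertible_mult_swap_diff_mat:
  fixes X :: "'a::field^'n^'m" and Y :: "'a^'m^'n"
  assumes inv: "invertible (Y ** X - mat c)" and "c \<noteq> 0"
  shows "invertible (X ** Y - mat c)"
  unfolding invertible_left_inverse matrix_left_invertible_ker
proof (intro allI impI)
  fix x assume x: "(X ** Y - mat c) *v x = 0"
  from x have "(Y ** X - mat c) *v (Y *v x) = 0"
    by (simp add: mult_diff_mat_intertwine)
  then have "Y *v x = 0"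
    by (simp add: matrix_vector_mult_eq_iff_matrix_inv[OF inv])
  with x have "c *s x = 0"
    by (simp add: matrix_vector_mult_diff_rdistrib matrix_vector_mult_mat
        flip: matrix_vector_mul_assoc)
  with \<open>c \<noteq> 0\<close> show "x = 0" by simp
qed

lemma push_through_matrix_inv:
  fixes X :: "'a::field^'n^'m" and Y :: "'a^'m^'n"
  assumes inv: "invertible (Y ** X - mat c)" and "c \<noteq> 0"
  shows "y - X *v (matrix_inv (Y ** X - mat c) *v (Y *v y))
       = - (c *s (matrix_inv (X ** Y - mat c) *v y))"
proof -
  let ?K = "matrix_inv (Y ** X - mat c)" and ?L = "matrix_inv (X ** Y - mat c)"
  have inv': "invertible (X ** Y - mat c)"
    using invertible_mult_swap_diff_mat[OF assms] .
  have "(X ** Y - mat c) *v (y - X *v (?K *v (Y *v y)))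
      = (X ** Y - mat c) *v y - X *v ((Y ** X - mat c) *v (?K *v (Y *v y)))"
    by (simp only: matrix_vector_mult_diff_distrib mult_diff_mat_intertwine)
  also have "\<dots> = - (c *s y)"
    unfolding matrix_vector_mult_matrix_inv[OF inv]
    by (simp add: matrix_vector_mult_diff_rdistrib matrix_vector_mult_mat
        flip: matrix_vector_mul_assoc)
  finally have "(X ** Y - mat c) *v (y - X *v (?K *v (Y *v y))) = - (c *s y)" .
  then have "?L *v ((X ** Y - mat c) *v (y - X *v (?K *v (Y *v y)))) = - (c *s (?L *v y))"
    by (simp add: matrix_vector_mult_uminus_right vector_scalar_commute)
  then show ?thesis
    by (simp add: matrix_vector_mult_matrix_inv[OF inv'])
qed

lemma matrix_vector_mult_csmult: "csmult c A *v x = c *s (A *v x)"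
  by (simp add: csmult_def matrix_vector_mult_def vec_eq_iff sum_distrib_left mult.assoc)

lemma cmat_mult: "cmat (X ** Y) = cmat X ** cmat Y"
  by (simp add: cmat_def matrix_matrix_mult_def vec_eq_iff)

lemma cmat_add: "cmat (X + Y) = cmat X + cmat Y"
  by (simp add: cmat_def vec_eq_iff)

lemma cmat_diff: "cmat (X - Y) = cmat X - cmat Y"
  by (simp add: cmat_def vec_eq_iff)

lemma cmat_uminus: "cmat (- X) = - cmat X"
  by (simp add: cmat_def vec_eq_iff)

lemma cmat_zero: "cmat 0 = 0"
  by (simp add: cmat_def vec_eq_iff)

lemma cmat_mat: "cmat (mat r) = mat (complex_of_real r)"
  by (simp add: cmat_def mat_def vec_eq_iff)

lemma cmat_scaleR: "cmat (r *\<^sub>R X) = csmult (complex_of_real r) (cmat X)"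
  by (simp add: cmat_def csmult_def vec_eq_iff)

lemma cmat_transpose: "cmat (transpose X) = cadj (cmat X)"
  by (simp add: cmat_def cadj_def transpose_def vec_eq_iff)

lemma cmat_blockmat: "cmat (blockmat P Q R S) = blockmat (cmat P) (cmat Q) (cmat R) (cmat S)"
  by (simp add: vec_eq_iff blockmat_def cmat_def split: sum.splits)

lemma cmat_matrix_inv:
  assumes "invertible X"
  shows "invertible (cmat X)" and "cmat (matrix_inv X) = matrix_inv (cmat X)"
proof -
  have "cmat X ** cmat (matrix_inv X) = mat 1" "cmat (matrix_inv X) ** cmat X = mat 1"
    by (simp_all add: matrix_inv_right matrix_inv_left assms cmat_mat flip: cmat_mult)
  then show inv: "invertible (cmat X)"
    unfolding invertible_def by blast
  show "cmat (matrix_inv X) = matrix_inv (cmat X)"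
    by (rule sym, rule matrix_inv_unique) fact+
qed

lemma cadj_mult: "cadj (X ** Y) = cadj Y ** cadj X"
  by (simp add: cadj_def matrix_matrix_mult_def vec_eq_iff mult.commute)

lemma cadj_add: "cadj (X + Y) = cadj X + cadj Y"
  by (simp add: cadj_def vec_eq_iff)

lemma cadj_mat: "cadj (mat c) = mat (cnj c)"
  by (simp add: cadj_def mat_def vec_eq_iff)

lemma cadj_matrix_inv:
  assumes "invertible H"
  shows "invertible (cadj H)" and "matrix_inv (cadj H) = cadj (matrix_inv H)"
proof -
  have "cadj H ** cadj (matrix_inv H) = mat 1" "cadj (matrix_inv H) ** cadj H = mat 1"
    by (simp_all add: matrix_inv_right matrix_inv_left assms cadj_mat flip: cadj_mult)
  then show "invertible (cadj H)"
    unfolding invertible_def by blast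
  then show "matrix_inv (cadj H) = cadj (matrix_inv H)"
    by (rule matrix_inv_unique) fact
qed

lemma is_singular_value_iff:
  assumes "\<xi> > 0"
  shows "is_singular_value G \<xi> \<longleftrightarrow>
    (\<exists>v. v \<noteq> 0 \<and> cadj G *v (G *v v) = complex_of_real (\<xi>\<^sup>2) *s v)"
proof -
  let ?r = "complex_of_real \<xi>"
  have "?r \<noteq> 0"
    using assms by simp
  show ?thesis
  proof
    assume "is_singular_value G \<xi>"
    then obtain v w where "v \<noteq> 0" and "G *v v = ?r *s w" and "cadj G *v w = ?r *s v"
      unfolding is_singular_value_def by blast
    then have "cadj G *v (G *v v) = complex_of_real (\<xi>\<^sup>2) *s v"
      by (simp add: power2_eq_square vector_scalar_commute vector_smult_assoc)
    with \<open>v \<noteq> 0\<close> show "\<exists>v. v \<noteq> 0 \<and> cadj G *v (G *v v) = complex_of_real (\<xi>\<^sup>2) *s v"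
      by blast
  next
    assume "\<exists>v. v \<noteq> 0 \<and> cadj G *v (G *v v) = complex_of_real (\<xi>\<^sup>2) *s v"
    then obtain v where "v \<noteq> 0" and eig: "cadj G *v (G *v v) = ?r *s (?r *s v)"
      by (auto simp: power2_eq_square vector_smult_assoc)
    define w where "w = inverse ?r *s (G *v v)"
    have "G *v v = ?r *s w" and "cadj G *v w = ?r *s v"
      using \<open>?r \<noteq> 0\<close> eig by (simp_all add: w_def vector_smult_assoc vector_scalar_commute)
    moreover have "w \<noteq> 0"
      using \<open>cadj G *v w = ?r *s v\<close> \<open>?r \<noteq> 0\<close> \<open>v \<noteq> 0\<close> by auto
    ultimately show "is_singular_value G \<xi>"
      unfolding is_singular_value_def using \<open>v \<noteq> 0\<close> assms by auto
  qed
qed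

lemma state_space_mult_vec:
  fixes H :: "complex^'n^'n" and b :: "complex^'u^'n" and c :: "complex^'n^'y"
    and d :: "complex^'u^'y"
  assumes "invertible H"
  shows "(c ** matrix_inv H ** b + d) *v v = c *v (matrix_inv H *v (b *v v)) + d *v v"
    and "cadj (c ** matrix_inv H ** b + d) *v w
       = cadj b *v (matrix_inv (cadj H) *v (cadj c *v w)) + cadj d *v w"
  by (simp_all add: cadj_matrix_inv[OF assms] cadj_add cadj_mult matrix_vector_mult_add_rdistrib
      matrix_vector_mul_assoc matrix_mul_assoc)

lemma is_singular_value_state_space_iff:
  fixes H :: "complex^'n^'n" and b :: "complex^'u^'n" and c :: "complex^'n^'y"
    and d :: "complex^'u^'y"
  assumes H: "invertible H" and "\<xi> > 0"
  shows "is_singular_value (c ** matrix_inv H ** b + d) \<xi> \<longleftrightarrow>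
    (\<exists>x z v w. v \<noteq> 0 \<and> H *v x = b *v v \<and> cadj H *v z = cadj c *v w
       \<and> c *v x + d *v v = w \<and> cadj b *v z + cadj d *v w = complex_of_real (\<xi>\<^sup>2) *s v)"
proof -
  have H': "invertible (cadj H)"
    using cadj_matrix_inv[OF H] by simp
  show ?thesis
    unfolding is_singular_value_iff[OF \<open>\<xi> > 0\<close>] state_space_mult_vec[OF H]
      matrix_vector_mult_eq_iff_matrix_inv[OF H] matrix_vector_mult_eq_iff_matrix_inv[OF H']
    by auto
qed

lemma feedthrough_equations_iff:
  fixes c :: "'a::field^'n^'y" and d :: "'a^'u^'y" and bt :: "'a^'m^'u" and dt :: "'a^'y^'u"
  assumes inv: "invertible (dt ** d - mat s)" and "s \<noteq> 0"
  defines "K \<equiv> matrix_inv (dt ** d - mat s)" and "L \<equiv> matrix_inv (d ** dt - mat s)"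
  shows "(c *v x + d *v v = w \<and> bt *v z + dt *v w = s *s v) \<longleftrightarrow>
    (v = - (K *v (dt *v (c *v x) + bt *v z)) \<and>
     w = - (s *s (L *v (c *v x)) + d *v (K *v (bt *v z))))"
    (is "?lhs \<longleftrightarrow> ?rhs")
proof -
  have "?lhs \<longleftrightarrow> w = c *v x + d *v v \<and> bt *v z + (dt *v (c *v x) + dt *v (d *v v)) = s *s v"
    by (auto simp: matrix_vector_right_distrib)
  also have "\<dots> \<longleftrightarrow> w = c *v x + d *v v \<and> (dt ** d - mat s) *v v = - (dt *v (c *v x) + bt *v z)"
    unfolding matrix_vector_mult_diff_rdistrib matrix_vector_mult_mat
    by (subst (1 2) eq_iff_diff_eq_0) (simp add: algebra_simps flip: matrix_vector_mul_assoc)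
  also have "\<dots> \<longleftrightarrow> w = c *v x + d *v v \<and> v = - (K *v (dt *v (c *v x) + bt *v z))"
    by (simp only: matrix_vector_mult_eq_iff_matrix_inv[OF inv] K_def
        matrix_vector_mult_uminus_right)
  also have "\<dots> \<longleftrightarrow> ?rhs"
  proof -
    have push: "c *v x - d *v (K *v (dt *v (c *v x))) = - (s *s (L *v (c *v x)))"
      using push_through_matrix_inv[OF inv \<open>s \<noteq> 0\<close>] by (simp add: K_def L_def)
    have "c *v x + d *v (- (K *v (dt *v (c *v x) + bt *v z)))
        = c *v x + (- (d *v (K *v (dt *v (c *v x)))) - d *v (K *v (bt *v z)))"
      by (simp add: matrix_vector_mult_uminus_right matrix_vector_right_distrib
          matrix_vector_mult_diff_distrib)
    also have "\<dots> = (c *v x - d *v (K *v (dt *v (c *v x)))) - d *v (K *v (bt *v z))"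
      by (simp only: diff_conv_add_uminus add.assoc)
    also have "\<dots> = - (s *s (L *v (c *v x)) + d *v (K *v (bt *v z)))"
      unfolding push by (simp only: minus_add_distrib diff_conv_add_uminus)
    finally show ?thesis
      by auto
  qed
  finally show ?thesis .
qed

definition hamiltonian_eqs :: "complex^'n^'n \<Rightarrow> complex^'u^'n \<Rightarrow> complex^'n^'y \<Rightarrow> complex^'u^'y
    \<Rightarrow> real \<Rightarrow> complex^'n \<Rightarrow> complex^'n \<Rightarrow> bool" where
  "hamiltonian_eqs H b c d \<xi> x z \<longleftrightarrow>
    (let s = complex_of_real (\<xi>\<^sup>2);
         K = matrix_inv (cadj d ** d - mat s);
         L = matrix_inv (d ** cadj d - mat s)
     in H *v x = - (b *v (K *v (cadj d *v (c *v x) + cadj b *v z)))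
      \<and> cadj H *v z = - (cadj c *v (s *s (L *v (c *v x)) + d *v (K *v (cadj b *v z)))))"

lemma is_singular_value_iff_hamiltonian_eqs:
  fixes H :: "complex^'n^'n" and b :: "complex^'u^'n" and c :: "complex^'n^'y"
    and d :: "complex^'u^'y"
  assumes H: "invertible H" and inv: "invertible (cadj d ** d - mat (complex_of_real (\<xi>\<^sup>2)))"
    and "\<xi> > 0"
  shows "is_singular_value (c ** matrix_inv H ** b + d) \<xi> \<longleftrightarrow>
    (\<exists>x z. (x \<noteq> 0 \<or> z \<noteq> 0) \<and> hamiltonian_eqs H b c d \<xi> x z)"
proof -
  define s where "s = complex_of_real (\<xi>\<^sup>2)"
  define K where "K = matrix_inv (cadj d ** d - mat s)"
  define L where "L = matrix_inv (d ** cadj d - mat s)"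
  define V where "V x z = - (K *v (cadj d *v (c *v x) + cadj b *v z))" for x z
  define W where "W x z = - (s *s (L *v (c *v x)) + d *v (K *v (cadj b *v z)))" for x z
  have "s \<noteq> 0"
    using \<open>\<xi> > 0\<close> by (simp add: s_def)
  have H': "invertible (cadj H)"
    using cadj_matrix_inv[OF H] by simp
  have "V x z = 0 \<longleftrightarrow> x = 0 \<and> z = 0"
    if "H *v x = b *v V x z" and "cadj H *v z = cadj c *v W x z" for x z
  proof
    assume "V x z = 0"
    with that(1) have "x = 0"
      by (simp add: matrix_vector_mult_eq_iff_matrix_inv[OF H])
    with \<open>V x z = 0\<close> have "W x z = 0"
      by (simp add: V_def W_def)
    with that(2) \<open>x = 0\<close> show "x = 0 \<and> z = 0"
      by (simp add: matrix_vector_mult_eq_iff_matrix_inv[OF H'])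
  qed (simp add: V_def)
  then have "(\<exists>x z v w. v \<noteq> 0 \<and> H *v x = b *v v \<and> cadj H *v z = cadj c *v w
        \<and> v = V x z \<and> w = W x z)
      \<longleftrightarrow> (\<exists>x z. (x \<noteq> 0 \<or> z \<noteq> 0) \<and> H *v x = b *v V x z \<and> cadj H *v z = cadj c *v W x z)"
    by blast
  moreover have "c *v x + d *v v = w \<and> cadj b *v z + cadj d *v w = s *s v
      \<longleftrightarrow> v = V x z \<and> w = W x z" for x z v w
    unfolding V_def W_def K_def L_def
    using feedthrough_equations_iff[OF inv[folded s_def] \<open>s \<noteq> 0\<close>] .
  ultimately show ?thesis
    unfolding is_singular_value_state_space_iff[OF H \<open>\<xi> > 0\<close>] hamiltonian_eqs_def Let_def
      s_def[symmetric] K_def[symmetric] L_def[symmetric]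
    by (simp only: V_def W_def matrix_vector_mult_uminus_right)
qed

lemma bounded_linear_scalar_mult_vec: "bounded_linear (\<lambda>c::complex. c *s (v::complex^'n))"
  unfolding linear_conv_bounded_linear[symmetric]
  by (rule linearI) (simp_all add: vector_sadd_rdistrib vec_eq_iff)

lemma has_vector_derivative_cexp_real:
  "((\<lambda>t. exp (lam * complex_of_real t)) has_vector_derivative lam * exp (lam * complex_of_real t))
     (at t within S)"
proof -
  have "((\<lambda>z. exp (lam * z)) has_field_derivative lam * exp (lam * complex_of_real t))
      (at (complex_of_real t))"
    by (auto intro!: derivative_eq_intros)
  then show ?thesis
    using has_vector_derivative_real_field by blast
qed

lemma has_vector_derivative_cexp_real_scaled:
  "((\<lambda>t. exp (lam * complex_of_real t) *s v) has_vector_derivative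
     exp (lam * complex_of_real t) *s (lam *s (v::complex^'n))) (at t within S)"
  using bounded_linear.has_vector_derivative[OF bounded_linear_scalar_mult_vec
      has_vector_derivative_cexp_real]
  by (simp add: vector_smult_assoc mult.commute)

lemma linear_ode_solution_eq_exp:
  fixes u \<psi> :: "real \<Rightarrow> complex^'n"
  assumes "convex I" "0 \<in> I"
    and deriv: "\<And>t. t \<in> I \<Longrightarrow> (u has_vector_derivative \<psi> t) (at t within I)"
    and ode: "\<And>t. t \<in> I \<Longrightarrow> \<psi> t = lam *s u t"
    and "t \<in> I"
  shows "u t = exp (lam * complex_of_real t) *s u 0"
proof -
  have "u t $ k = exp (lam * complex_of_real t) * u 0 $ k" for k
  proof -
    define g where "g s = exp (- lam * complex_of_real s) * u s $ k" for s
    have "(g has_vector_derivative 0) (at s within I)" if "s \<in> I" for s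
    proof -
      have "((\<lambda>s. u s $ k) has_vector_derivative lam * u s $ k) (at s within I)"
        using bounded_linear.has_vector_derivative[OF bounded_linear_vec_nth deriv[OF that]]
          ode[OF that] by simp
      from has_vector_derivative_mult[OF has_vector_derivative_cexp_real this]
      show ?thesis
        unfolding g_def by (rule has_vector_derivative_eq_rhs) (simp add: algebra_simps)
    qed
    then obtain c where "\<And>s. s \<in> I \<Longrightarrow> g s = c"
      using has_vector_derivative_zero_constant[OF \<open>convex I\<close>] by metis
    then have "g t = g 0"
      using \<open>t \<in> I\<close> \<open>0 \<in> I\<close> by metis
    then show ?thesis
      by (simp add: g_def exp_minus field_simps)
  qed
  then show ?thesis
    by (simp add: vec_eq_iff)
qed

definition char_eq_L :: "nat \<Rightarrow> (nat \<Rightarrow> real^'n^'n) \<Rightarrow> (nat \<Rightarrow> real) \<Rightarrow> real^'u^'n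
     \<Rightarrow> real^'n^'y \<Rightarrow> real^'u^'y \<Rightarrow> real \<Rightarrow> complex \<Rightarrow> complex^('n+'n) \<Rightarrow> bool" where
  "char_eq_L m A tau B C D \<xi> lam \<phi> \<longleftrightarrow>
     lam *s \<phi> = cmat (M0 A B C D \<xi>) *v \<phi>
       + (\<Sum>i\<in>{1..m}. cmat (Mpos A i) *v (exp (- complex_of_real (tau i) * lam) *s \<phi>)
                   + cmat (Mneg A i) *v (exp (complex_of_real (tau i) * lam) *s \<phi>))"

lemma delays_in_interval:
  assumes "m \<ge> 1" and "\<forall>i\<in>{1..m}. tau i \<ge> 0"
  shows "0 \<in> {- tau_max m tau .. tau_max m tau}"
    and "i \<in> {1..m} \<Longrightarrow> tau i \<in> {- tau_max m tau .. tau_max m tau}"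
    and "i \<in> {1..m} \<Longrightarrow> - tau i \<in> {- tau_max m tau .. tau_max m tau}"
proof -
  have le: "tau i \<le> tau_max m tau" if "i \<in> {1..m}" for i
    using that by (simp add: tau_max_def)
  have "0 \<le> tau 1" and "tau 1 \<le> tau_max m tau"
    using assms le[of 1] by simp_all
  then have "0 \<le> tau_max m tau"
    by linarith
  then show "0 \<in> {- tau_max m tau .. tau_max m tau}"
    by simp
  show "tau i \<in> {- tau_max m tau .. tau_max m tau}" "- tau i \<in> {- tau_max m tau .. tau_max m tau}"
    if "i \<in> {1..m}"
    using le[OF that] assms(2) that by fastforce+
qed

lemma in_dom_L_transform:
  assumes "m \<ge> 1" and "\<forall>i\<in>{1..m}. tau i \<ge> 0"
    and dom: "in_dom_L m A tau B C D \<xi> u \<psi>"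
    and eq: "\<And>t. t \<in> {- tau_max m tau .. tau_max m tau} \<Longrightarrow> u' t = u t \<and> \<psi>' t = \<psi> t"
  shows "in_dom_L m A tau B C D \<xi> u' \<psi>'"
proof -
  define I where "I = {- tau_max m tau .. tau_max m tau}"
  have u: "u' t = u t" and \<psi>: "\<psi>' t = \<psi> t" if "t \<in> I" for t
    using eq that by (simp_all add: I_def)
  have "0 \<in> I" and tau_I: "\<And>i. i \<in> {1..m} \<Longrightarrow> tau i \<in> I \<and> - tau i \<in> I"
    using delays_in_interval[OF assms(1,2)] by (simp_all add: I_def)
  have "(\<Sum>i\<in>{1..m}. cmat (Mpos A i) *v u' (- tau i) + cmat (Mneg A i) *v u' (tau i))
      = (\<Sum>i\<in>{1..m}. cmat (Mpos A i) *v u (- tau i) + cmat (Mneg A i) *v u (tau i))"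
    by (rule sum.cong) (simp_all add: u tau_I)
  with dom show ?thesis
    unfolding in_dom_L_def Let_def I_def[symmetric]
    by (auto simp: u \<psi> \<open>0 \<in> I\<close> cong: continuous_on_cong
        intro: has_vector_derivative_transform[where f = u])
qed

lemma in_dom_L_exp_iff:
  "in_dom_L m A tau B C D \<xi> (\<lambda>t. exp (lam * complex_of_real t) *s \<phi>)
      (\<lambda>t. exp (lam * complex_of_real t) *s (lam *s \<phi>))
   \<longleftrightarrow> char_eq_L m A tau B C D \<xi> lam \<phi>"
proof -
  have deriv: "((\<lambda>t. exp (lam * complex_of_real t) *s v) has_vector_derivative
      exp (lam * complex_of_real t) *s (lam *s v)) (at t within S)" for v :: "complex^('n::finite+'n)" and t S
    by (rule has_vector_derivative_cexp_real_scaled)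
  have "continuous_on S (\<lambda>t. exp (lam * complex_of_real t) *s v)" for S and v :: "complex^('n::finite+'n)"
    using deriv by (rule continuous_on_vector_derivative)
  moreover have "exp (lam * complex_of_real 0) *s (lam *s \<phi>)
        = cmat (M0 A B C D \<xi>) *v (exp (lam * complex_of_real 0) *s \<phi>)
        + (\<Sum>i\<in>{1..m}. cmat (Mpos A i) *v (exp (lam * complex_of_real (- tau i)) *s \<phi>)
                    + cmat (Mneg A i) *v (exp (lam * complex_of_real (tau i)) *s \<phi>))
      \<longleftrightarrow> char_eq_L m A tau B C D \<xi> lam \<phi>"
    by (simp add: char_eq_L_def mult.commute)
  ultimately show ?thesis
    unfolding in_dom_L_def Let_def using deriv by blast
qed

lemma eigenfunction_L_exp:
  assumes "m \<ge> 1" and "\<forall>i\<in>{1..m}. tau i \<ge> 0"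
    and dom: "in_dom_L m A tau B C D \<xi> u \<psi>"
    and eig: "\<And>t. t \<in> {- tau_max m tau .. tau_max m tau} \<Longrightarrow> \<psi> t = lam *s u t"
  shows "\<forall>t\<in>{- tau_max m tau .. tau_max m tau}. u t = exp (lam * complex_of_real t) *s u 0"
    and "char_eq_L m A tau B C D \<xi> lam (u 0)"
proof -
  define I where "I = {- tau_max m tau .. tau_max m tau}"
  have "0 \<in> I" and "convex I"
    using delays_in_interval(1)[OF assms(1,2)] by (simp_all add: I_def)
  have deriv: "(u has_vector_derivative \<psi> t) (at t within I)" if "t \<in> I" for t
    using dom that unfolding in_dom_L_def Let_def I_def by blast
  have u: "u t = exp (lam * complex_of_real t) *s u 0" if "t \<in> I" for t
    using \<open>convex I\<close> \<open>0 \<in> I\<close> deriv eig[folded I_def] that by (rule linear_ode_solution_eq_exp)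
  then show "\<forall>t\<in>{- tau_max m tau .. tau_max m tau}. u t = exp (lam * complex_of_real t) *s u 0"
    unfolding I_def by blast
  have "in_dom_L m A tau B C D \<xi> (\<lambda>t. exp (lam * complex_of_real t) *s u 0)
      (\<lambda>t. exp (lam * complex_of_real t) *s (lam *s u 0))"
  proof (rule in_dom_L_transform[OF assms(1,2) dom])
    fix t assume "t \<in> {- tau_max m tau .. tau_max m tau}"
    then have "t \<in> I"
      by (simp add: I_def)
    then show "exp (lam * complex_of_real t) *s u 0 = u t
        \<and> exp (lam * complex_of_real t) *s (lam *s u 0) = \<psi> t"
      using u[OF \<open>t \<in> I\<close>] eig[folded I_def, OF \<open>t \<in> I\<close>]
      by (simp add: vector_smult_assoc mult.commute)
  qed
  then show "char_eq_L m A tau B C D \<xi> lam (u 0)"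
    by (simp only: in_dom_L_exp_iff)
qed

lemma is_eigenvalue_L_iff_char_eq_L:
  assumes "m \<ge> 1" and "\<forall>i\<in>{1..m}. tau i \<ge> 0"
  shows "is_eigenvalue_L m A tau B C D \<xi> lam \<longleftrightarrow> (\<exists>\<phi>. \<phi> \<noteq> 0 \<and> char_eq_L m A tau B C D \<xi> lam \<phi>)"
proof -
  define I where "I = {- tau_max m tau .. tau_max m tau}"
  have "0 \<in> I"
    using delays_in_interval(1)[OF assms] by (simp add: I_def)
  show ?thesis
  proof
    assume "is_eigenvalue_L m A tau B C D \<xi> lam"
    then obtain u \<psi> where dom: "in_dom_L m A tau B C D \<xi> u \<psi>" and "\<exists>t\<in>I. u t \<noteq> 0"
      and eig: "\<And>t. t \<in> I \<Longrightarrow> \<psi> t = lam *s u t"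
      unfolding is_eigenvalue_L_def Let_def I_def by blast
    note exp = eigenfunction_L_exp[OF assms dom eig[unfolded I_def]]
    obtain t where "t \<in> I" and "u t \<noteq> 0"
      using \<open>\<exists>t\<in>I. u t \<noteq> 0\<close> by blast
    moreover have "u t = exp (lam * complex_of_real t) *s u 0"
      using exp(1) \<open>t \<in> I\<close> unfolding I_def by blast
    ultimately have "u 0 \<noteq> 0"
      by auto
    with exp(2) show "\<exists>\<phi>. \<phi> \<noteq> 0 \<and> char_eq_L m A tau B C D \<xi> lam \<phi>"
      by blast
  next
    assume "\<exists>\<phi>. \<phi> \<noteq> 0 \<and> char_eq_L m A tau B C D \<xi> lam \<phi>"
    then obtain \<phi> where "\<phi> \<noteq> 0" and "char_eq_L m A tau B C D \<xi> lam \<phi>"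
      by blast
    then have "in_dom_L m A tau B C D \<xi> (\<lambda>t. exp (lam * complex_of_real t) *s \<phi>)
        (\<lambda>t. exp (lam * complex_of_real t) *s (lam *s \<phi>))"
      by (simp only: in_dom_L_exp_iff)
    moreover have "exp (lam * complex_of_real t) *s (lam *s \<phi>)
        = lam *s (exp (lam * complex_of_real t) *s \<phi>)" for t
      by (simp add: vector_smult_assoc mult.commute)
    moreover have "exp (lam * complex_of_real 0) *s \<phi> \<noteq> 0"
      using \<open>\<phi> \<noteq> 0\<close> by simp
    ultimately show "is_eigenvalue_L m A tau B C D \<xi> lam"
      unfolding is_eigenvalue_L_def Let_def I_def[symmetric] using \<open>0 \<in> I\<close> by blast
  qed
qed

definition join :: "'a^'n \<Rightarrow> 'a^'n \<Rightarrow> 'a^('n+'n)" where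
  "join x z = (\<chi> i. case i of Inl a \<Rightarrow> x$a | Inr a \<Rightarrow> z$a)"

lemma ex_join_iff: "(\<exists>\<phi>. P \<phi>) \<longleftrightarrow> (\<exists>x z. P (join x z))"
proof -
  have "\<phi> = join (\<chi> a. \<phi>$Inl a) (\<chi> a. \<phi>$Inr a)" for \<phi> :: "'a^('n::finite+'n)"
    by (simp add: join_def vec_eq_iff split: sum.splits)
  then show ?thesis
    by metis
qed

lemma join_eq_iff: "join x z = join x' z' \<longleftrightarrow> x = x' \<and> z = z'"
  by (auto simp: join_def vec_eq_iff split: sum.splits)

lemma join_eq_0_iff: "join x z = 0 \<longleftrightarrow> x = 0 \<and> z = 0"
proof -
  have "join 0 0 = (0::'a::zero^('n::finite+'n))"
    by (simp add: join_def vec_eq_iff split: sum.splits)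
  then show ?thesis
    by (metis join_eq_iff)
qed

lemma join_add: "join x z + join x' z' = join (x + x') (z + z')"
  by (simp add: join_def vec_eq_iff split: sum.splits)

lemma scalar_mult_join: "c *s join x z = join (c *s x) (c *s z)"
  by (simp add: join_def vec_eq_iff split: sum.splits)

lemma sum_join: "(\<Sum>i\<in>S. join (f i) (g i)) = join (\<Sum>i\<in>S. f i) (\<Sum>i\<in>S. g i)"
  by (simp add: join_def vec_eq_iff split: sum.splits)

lemma sum_UNIV_sum_type:
  "sum g (UNIV::('a::finite + 'b::finite) set) = sum (g \<circ> Inl) UNIV + sum (g \<circ> Inr) UNIV"
  using sum.Plus[of "UNIV::'a set" "UNIV::'b set" g] by simp

lemma blockmat_mult_join:
  "blockmat P Q R S *v join x z = join (P *v x + Q *v z) (R *v x + S *v z)"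
  by (simp add: vec_eq_iff blockmat_def join_def matrix_vector_mult_def sum_UNIV_sum_type
      sum.distrib split: sum.splits)

lemma blockmat_eq_iff:
  fixes P Q R S :: "'a::field^'n^'n" and Ap An :: "nat \<Rightarrow> 'a^'n^'n"
  shows "(s *s join x z = blockmat P Q R S *v join x z
            + (\<Sum>i\<in>I. blockmat (Ap i) 0 0 0 *v (ep i *s join x z)
                     + blockmat 0 0 0 (An i) *v (en i *s join x z)))
     \<longleftrightarrow> s *s x = P *v x + Q *v z + (\<Sum>i\<in>I. ep i *s (Ap i *v x))
       \<and> s *s z = R *v x + S *v z + (\<Sum>i\<in>I. en i *s (An i *v z))"
  by (simp add: scalar_mult_join blockmat_mult_join join_add sum_join join_eq_iff
      vector_scalar_commute)

lemma char_mat_mult_vec: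
  "char_mat m A tau lam *v x = lam *s x - cmat (A 0) *v x
     - (\<Sum>i\<in>{1..m}. exp (- complex_of_real (tau i) * lam) *s (cmat (A i) *v x))"
  by (simp add: char_mat_def matrix_vector_mult_diff_rdistrib matrix_vector_mult_mat
      matrix_vector_mult_sum_left matrix_vector_mult_csmult)

lemma cadj_char_mat_mult_vec:
  assumes "cnj lam = - lam"
  shows "cadj (char_mat m A tau lam) *v z = - (lam *s z) - cadj (cmat (A 0)) *v z
     - (\<Sum>i\<in>{1..m}. exp (complex_of_real (tau i) * lam) *s (cadj (cmat (A i)) *v z))"
proof -
  have "cadj (char_mat m A tau lam) = mat (cnj lam) - cadj (cmat (A 0))
      - (\<Sum>i\<in>{1..m}. csmult (cnj (exp (- complex_of_real (tau i) * lam))) (cadj (cmat (A i))))"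
    by (simp add: vec_eq_iff cadj_def char_mat_def mat_def csmult_def cmat_def)
  moreover have "cnj (exp (- complex_of_real (tau i) * lam)) = exp (complex_of_real (tau i) * lam)"
    for i
    by (simp add: exp_cnj assms)
  ultimately show ?thesis
    by (simp add: assms matrix_vector_mult_diff_rdistrib matrix_vector_mult_mat
        matrix_vector_mult_sum_left matrix_vector_mult_csmult)
qed

lemma cmat_M0:
  assumes Dxi: "invertible (Dxi D \<xi>)" and "\<xi> > 0"
  defines "K \<equiv> matrix_inv (cadj (cmat D) ** cmat D - mat (complex_of_real (\<xi>\<^sup>2)))"
    and "L \<equiv> matrix_inv (cmat D ** cadj (cmat D) - mat (complex_of_real (\<xi>\<^sup>2)))"
  shows "cmat (M0 A B C D \<xi>) = blockmat
     (cmat (A 0) - cmat B ** K ** cadj (cmat D) ** cmat C)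
     (- (cmat B ** K ** cadj (cmat B)))
     (csmult (complex_of_real (\<xi>\<^sup>2)) (cadj (cmat C) ** L ** cmat C))
     (- cadj (cmat (A 0)) + cadj (cmat C) ** cmat D ** K ** cadj (cmat B))"
proof -
  have Dtxi: "invertible (Dtxi D \<xi>)"
    using invertible_mult_swap_diff_mat[where X = D and Y = "transpose D"] Dxi \<open>\<xi> > 0\<close>
    by (simp add: Dxi_def Dtxi_def)
  have "cmat (matrix_inv (Dxi D \<xi>)) = K" and "cmat (matrix_inv (Dtxi D \<xi>)) = L"
    using cmat_matrix_inv(2)[OF Dxi] cmat_matrix_inv(2)[OF Dtxi]
    by (simp_all add: K_def L_def Dxi_def Dtxi_def cmat_diff cmat_mult cmat_transpose cmat_mat)
  then show ?thesis
    by (simp add: M0_def cmat_blockmat cmat_diff cmat_add cmat_uminus cmat_mult cmat_transpose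
        cmat_scaleR)
qed

lemma cmat_Mpos: "cmat (Mpos A i) = blockmat (cmat (A i)) 0 0 0"
  by (simp add: Mpos_def cmat_blockmat cmat_zero)

lemma cmat_Mneg: "cmat (Mneg A i) = blockmat 0 0 0 (- cadj (cmat (A i)))"
  by (simp add: Mneg_def cmat_blockmat cmat_zero cmat_uminus cmat_transpose)

lemma char_eq_L_iff_hamiltonian_eqs:
  assumes lam: "cnj lam = - lam" and "invertible (Dxi D \<xi>)" and "\<xi> > 0"
  shows "(\<exists>\<phi>. \<phi> \<noteq> 0 \<and> char_eq_L m A tau B C D \<xi> lam \<phi>) \<longleftrightarrow>
    (\<exists>x z. (x \<noteq> 0 \<or> z \<noteq> 0) \<and> hamiltonian_eqs (char_mat m A tau lam) (cmat B) (cmat C) (cmat D) \<xi> x z)"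
proof -
  define s where "s = complex_of_real (\<xi>\<^sup>2)"
  define K where "K = matrix_inv (cadj (cmat D) ** cmat D - mat s)"
  define L where "L = matrix_inv (cmat D ** cadj (cmat D) - mat s)"
  have row1: "lam *s x = (cmat (A 0) - cmat B ** K ** cadj (cmat D) ** cmat C) *v x
        + (- (cmat B ** K ** cadj (cmat B))) *v z
        + (\<Sum>i\<in>{1..m}. exp (- complex_of_real (tau i) * lam) *s (cmat (A i) *v x))
     \<longleftrightarrow> char_mat m A tau lam *v x
        = - (cmat B *v (K *v (cadj (cmat D) *v (cmat C *v x) + cadj (cmat B) *v z)))"
    for x z
    unfolding char_mat_mult_vec matrix_vector_mult_diff_rdistrib matrix_vector_mult_uminus_left
      matrix_vector_right_distrib matrix_vector_mult_uminus_right
    by (subst (1 2) eq_iff_diff_eq_0) (simp add: algebra_simps flip: matrix_vector_mul_assoc)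
  have row2: "lam *s z = csmult s (cadj (cmat C) ** L ** cmat C) *v x
        + (- cadj (cmat (A 0)) + cadj (cmat C) ** cmat D ** K ** cadj (cmat B)) *v z
        + (\<Sum>i\<in>{1..m}. exp (complex_of_real (tau i) * lam) *s (- cadj (cmat (A i)) *v z))
     \<longleftrightarrow> cadj (char_mat m A tau lam) *v z
        = - (cadj (cmat C) *v (s *s (L *v (cmat C *v x)) + cmat D *v (K *v (cadj (cmat B) *v z))))"
    for x z
    unfolding cadj_char_mat_mult_vec[OF lam] matrix_vector_mult_add_rdistrib
      matrix_vector_mult_uminus_left matrix_vector_right_distrib matrix_vector_mult_uminus_right
      matrix_vector_mult_csmult vector_scalar_commute
    by (subst (1 2) eq_iff_diff_eq_0)
      (auto simp: algebra_simps sum_negf simp flip: matrix_vector_mul_assoc)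
  show ?thesis
    unfolding ex_join_iff join_eq_0_iff char_eq_L_def
      cmat_M0[OF \<open>invertible (Dxi D \<xi>)\<close> \<open>\<xi> > 0\<close>, folded s_def, folded K_def L_def]
      cmat_Mpos cmat_Mneg blockmat_eq_iff row1 row2 hamiltonian_eqs_def Let_def
      s_def[symmetric] K_def[symmetric] L_def[symmetric]
    by blast
qed

theorem theorem1:
  fixes m :: nat
    and A :: "nat \<Rightarrow> real^'n^'n"
    and tau :: "nat \<Rightarrow> real"
    and B :: "real^'u^'n" and C :: "real^'n^'y" and D :: "real^'u^'y"
    and \<xi> \<omega> :: real
  assumes "m \<ge> 1"
    and "\<forall>i\<in>{1..m}. tau i \<ge> 0"
    and stable: "\<forall>s. det (char_mat m A tau s) = 0 \<longrightarrow> Re s < 0"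
    and "\<xi> > 0"
    and "invertible (Dxi D \<xi>)"
    and "\<omega> \<ge> 0"
  shows "is_singular_value (transfer m A tau B C D (\<i> * complex_of_real \<omega>)) \<xi>
     \<longleftrightarrow> is_eigenvalue_L m A tau B C D \<xi> (\<i> * complex_of_real \<omega>)"
proof -
  define lam where "lam = \<i> * complex_of_real \<omega>"
  have H: "invertible (char_mat m A tau lam)"
    unfolding invertible_det_nz using stable by (auto simp: lam_def)
  have "invertible (cadj (cmat D) ** cmat D - mat (complex_of_real (\<xi>\<^sup>2)))"
    using cmat_matrix_inv(1)[OF \<open>invertible (Dxi D \<xi>)\<close>]
    by (simp add: Dxi_def cmat_diff cmat_mult cmat_transpose cmat_mat)
  then have "is_singular_value (transfer m A tau B C D lam) \<xi> \<longleftrightarrow>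
      (\<exists>x z. (x \<noteq> 0 \<or> z \<noteq> 0) \<and> hamiltonian_eqs (char_mat m A tau lam) (cmat B) (cmat C) (cmat D) \<xi> x z)"
    unfolding transfer_def by (rule is_singular_value_iff_hamiltonian_eqs[OF H _ \<open>\<xi> > 0\<close>])
  also have "\<dots> \<longleftrightarrow> (\<exists>\<phi>. \<phi> \<noteq> 0 \<and> char_eq_L m A tau B C D \<xi> lam \<phi>)"
    by (rule char_eq_L_iff_hamiltonian_eqs[symmetric])
      (simp_all add: lam_def \<open>invertible (Dxi D \<xi>)\<close> \<open>\<xi> > 0\<close>)
  also have "\<dots> \<longleftrightarrow> is_eigenvalue_L m A tau B C D \<xi> lam"
    by (rule is_eigenvalue_L_iff_char_eq_L[symmetric]) fact+
  finally show ?thesis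
    unfolding lam_def .
qed

end
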